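(* Let $\mathbb M^{n+1}$ be Minkowski space with form $\langle-,-\rangle$ of signature $-+\dots+$, let $c>0$, and let $\mathcal K^c=\{x\in\mathbb M^{n+1}:\langle x,x\rangle=-c^2,\ x \text{ future-oriented}\}$ with the Riemannian metric induced by $\langle-,-\rangle$ (a hyperbolic space of curvature $-1/c^2$), so that $T_p\mathcal K^c=p^\perp$ with the inner product $\langle-,-\rangle|_{p^\perp}$. Fix $p\in\mathcal K^c$. For $w\in T_p\mathcal K^c$ put $v(w):=c\tanh(|w|/c)\,\frac{w}{|w|}$ ($v(0)=0$); this is a bijection from $T_p\mathcal K^c$ onto the open ball $\mathcal V_p=\{u\in p^\perp:\langle u,u\rangle<c^2\}$. For $w_1,w_2\in T_p\mathcal K^c$, let $q:=\exp_p w_1$, let $w_2'\in T_q\mathcal K^c$ be the parallel transport of $w_2$ along the geodesic segment from $p$ to $q$, let $r:=\exp_q w_2'$, and define $w_1\oplus w_2:=\exp_p^{-1}r$. For $v_1,v_2\in\mathcal V_p$ with $v_i=v(w_i)$ define $v_1\oplus v_2:=v(w_1\oplus w_2)$. Then $v_1\oplus v_2$ equals the Einstein relativistic velocity sum $$v_1\oplus v_2=\frac{1}{1+\frac{\langle v_1,v_2\rangle}{c^2}}\left(v_1+\frac{v_2}{\gamma_{v_1}}+\frac{1}{c^2}\,\frac{\gamma_{v_1}}{1+\gamma_{v_1}}\langle v_1,v_2\rangle\, v_1\right),\qquad \gamma_{v_1}=\Big(1-\frac{\langle v_1,v_1\rangle}{c^2}\Big)^{-1/2}.$$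
   Context: $\exp$ denotes the Riemannian exponential map of $\mathcal K^c$ and $|w|=\sqrt{\langle w,w\rangle}$ for $w\in p^\perp$. The velocity $v(w)$ is the relative velocity (as measured by $p$) of the inertial observer $\exp_p w$; the Einstein sum $v_1\oplus v_2$ is the velocity, relative to $p$, of an object moving with velocity $v_2$ relative to a frame that moves with velocity $v_1$ relative to $p$ (frames related by a pure boost). *)

theory Defs
  imports "HOL-Analysis.Analysis"
begin

text \<open>Minkowski space M^{n+1} is modelled as real \<times> 'a, with 'a an n-dimensional
Euclidean space; the first component is the time coordinate.\<close>

definition mink :: "real \<times> 'a::euclidean_space \<Rightarrow> real \<times> 'a \<Rightarrow> real" where
  "mink x y = - fst x * fst y + snd x \<bullet> snd y"

definition mnorm :: "real \<times> 'a::euclidean_space \<Rightarrow> real" where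
  "mnorm w = sqrt (mink w w)"

definition hypK :: "real \<Rightarrow> (real \<times> 'a::euclidean_space) set" where
  "hypK c = {x. mink x x = - (c^2) \<and> fst x > 0}"

definition tangent :: "real \<times> 'a::euclidean_space \<Rightarrow> (real \<times> 'a) set" where
  "tangent p = {w. mink p w = 0}"

text \<open>Geodesics of K^c as a (spacelike) submanifold of Minkowski space: curves in K^c
whose ambient acceleration is normal to K^c, i.e. lies in span of the position.\<close>
definition geodesic :: "real \<Rightarrow> (real \<Rightarrow> real \<times> 'a::euclidean_space) \<Rightarrow> (real \<Rightarrow> real \<times> 'a) \<Rightarrow> bool" where
  "geodesic c \<gamma> \<gamma>' \<longleftrightarrow> (\<forall>t. \<gamma> t \<in> hypK c \<and> (\<gamma> has_vector_derivative \<gamma>' t) (at t)) \<and>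
     (\<exists>a. \<forall>t. (\<gamma>' has_vector_derivative a t) (at t) \<and> (\<exists>k. a t = k *\<^sub>R \<gamma> t))"

definition expK :: "real \<Rightarrow> real \<times> 'a::euclidean_space \<Rightarrow> real \<times> 'a \<Rightarrow> real \<times> 'a" where
  "expK c p w = (THE q. \<exists>\<gamma> \<gamma>'. geodesic c \<gamma> \<gamma>' \<and> \<gamma> 0 = p \<and> \<gamma>' 0 = w \<and> \<gamma> 1 = q)"

text \<open>Parallel transport of u along the geodesic t \<mapsto> exp_p (t w), from t=0 to t=1,
for the induced Levi-Civita connection: a tangent vector field along the geodesic whose
ambient derivative is normal to K^c.\<close>
definition ptransp :: "real \<Rightarrow> real \<times> 'a::euclidean_space \<Rightarrow> real \<times> 'a \<Rightarrow> real \<times> 'a \<Rightarrow> real \<times> 'a" where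
  "ptransp c p w u = (THE u'. \<exists>\<gamma> \<gamma>' V. geodesic c \<gamma> \<gamma>' \<and> \<gamma> 0 = p \<and> \<gamma>' 0 = w \<and>
      V 0 = u \<and> (\<forall>t. V t \<in> tangent (\<gamma> t)) \<and>
      (\<exists>V'. \<forall>t. (V has_vector_derivative V' t) (at t) \<and> (\<exists>k. V' t = k *\<^sub>R \<gamma> t)) \<and>
      V 1 = u')"

definition oplusT :: "real \<Rightarrow> real \<times> 'a::euclidean_space \<Rightarrow> real \<times> 'a \<Rightarrow> real \<times> 'a \<Rightarrow> real \<times> 'a" where
  "oplusT c p w1 w2 =
     (let q = expK c p w1; w2' = ptransp c p w1 w2; r = expK c q w2'
      in THE w. w \<in> tangent p \<and> expK c p w = r)"

definition vel :: "real \<Rightarrow> real \<times> 'a::euclidean_space \<Rightarrow> real \<times> 'a" where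
  "vel c w = (if w = 0 then 0 else (c * tanh (mnorm w / c) / mnorm w) *\<^sub>R w)"

definition lorentz_gamma :: "real \<Rightarrow> real \<times> 'a::euclidean_space \<Rightarrow> real" where
  "lorentz_gamma c v = 1 / sqrt (1 - mink v v / c^2)"

definition einstein_add :: "real \<Rightarrow> real \<times> 'a::euclidean_space \<Rightarrow> real \<times> 'a \<Rightarrow> real \<times> 'a" where
  "einstein_add c v1 v2 =
     (1 / (1 + mink v1 v2 / c^2)) *\<^sub>R
       (v1 + (1 / lorentz_gamma c v1) *\<^sub>R v2 +
        (1 / c^2 * (lorentz_gamma c v1 / (1 + lorentz_gamma c v1)) * mink v1 v2) *\<^sub>R v1)"

end

(* The geodesic of K^c from p with initial velocity w in p^perp is
   t \<mapsto> cosh (a t) p + (sinh (a t) / a) w with rapidity a = |w|/c, so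
   exp_p w = \<gamma> (p + v(w)), where \<gamma> = cosh a is the Lorentz factor of v(w):
   the relative velocity is read off from the direction of the point exp_p w.
   Parallel transport from p to q = exp_p w1 is the restriction to p^perp of the
   Lorentz boost B with velocity v1 = v(w1) in the rest frame of p, and B p = q.
   Hence r = exp_q w2' = B (exp_p w2) = \<gamma>2 B (p + v2), and a direct expansion gives
   B (p + v2) = \<gamma>1 (1 + <v1,v2>/c^2) (p + v1 \<oplus> v2) with the Einstein sum on
   the right; so r points in the direction of p + v1 \<oplus> v2, i.e. v(w1 \<oplus> w2) = v1 \<oplus> v2. *)

theory Submission
  imports Defs
begin

section \<open>The Minkowski form\<close>

lemma mink_commute: "mink x y = mink y x"
  by (simp add: mink_def inner_commute)

lemma mink_add_left [simp]: "mink (x + y) z = mink x z + mink y z"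
  and mink_add_right [simp]: "mink z (x + y) = mink z x + mink z y"
  and mink_diff_left [simp]: "mink (x - y) z = mink x z - mink y z"
  and mink_diff_right [simp]: "mink z (x - y) = mink z x - mink z y"
  and mink_scaleR_left [simp]: "mink (a *\<^sub>R x) z = a * mink x z"
  and mink_scaleR_right [simp]: "mink z (a *\<^sub>R x) = a * mink z x"
  and mink_zero_left [simp]: "mink 0 z = 0"
  and mink_zero_right [simp]: "mink z 0 = 0"
  by (simp_all add: mink_def algebra_simps)

lemma bounded_bilinear_mink: "bounded_bilinear (mink :: real \<times> 'a::euclidean_space \<Rightarrow> _)"
proof (rule bounded_bilinear.intro)
  show "\<exists>K. \<forall>x y :: real \<times> 'a. norm (mink x y) \<le> norm x * norm y * K"
  proof (intro exI allI)
    fix x y :: "real \<times> 'a"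
    have "norm (mink x y) \<le> \<bar>fst x\<bar> * \<bar>fst y\<bar> + norm (snd x) * norm (snd y)"
      using Cauchy_Schwarz_ineq2[of "snd x" "snd y"] abs_mult[of "fst x" "fst y"]
      unfolding mink_def real_norm_def by arith
    also have "\<dots> \<le> norm x * norm y + norm x * norm y"
      using norm_fst_le[of "fst x" "snd x"] norm_fst_le[of "fst y" "snd y"]
        norm_snd_le[of "snd x" "fst x"] norm_snd_le[of "snd y" "fst y"]
      by (intro add_mono mult_mono) auto
    finally show "norm (mink x y) \<le> norm x * norm y * 2" by simp
  qed
qed simp_all

lemma has_real_derivative_mink:
  fixes f g :: "real \<Rightarrow> real \<times> 'a::euclidean_space"
  assumes "(f has_vector_derivative f') (at t)" "(g has_vector_derivative g') (at t)"
  shows "((\<lambda>t. mink (f t) (g t)) has_real_derivative mink (f t) g' + mink f' (g t)) (at t)"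
  using bounded_bilinear.has_vector_derivative[OF bounded_bilinear_mink assms]
  by (simp add: has_real_derivative_iff_has_vector_derivative)

lemma mink_pos_if_orthogonal_timelike:
  fixes p w :: "real \<times> 'a::euclidean_space"
  assumes "mink p p < 0" "mink p w = 0" "w \<noteq> 0"
  shows "mink w w > 0"
proof (rule ccontr)
  have norm_sq: "mink x x = norm (snd x)^2 - (fst x)^2" for x :: "real \<times> 'a"
    by (simp add: mink_def dot_square_norm power2_eq_square)
  assume "\<not> mink w w > 0"
  then have "norm (snd w)^2 \<le> \<bar>fst w\<bar>^2" by (simp add: norm_sq)
  then have W: "norm (snd w) \<le> \<bar>fst w\<bar>" by (rule power2_le_imp_le) simp
  from assms(1) have "norm (snd p)^2 < \<bar>fst p\<bar>^2" by (simp add: norm_sq)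
  then have P: "norm (snd p) < \<bar>fst p\<bar>" by (rule power2_less_imp_less) simp
  have "\<bar>fst p\<bar> * \<bar>fst w\<bar> = \<bar>snd p \<bullet> snd w\<bar>"
    using assms(2) by (simp add: mink_def abs_mult)
  also have "\<dots> \<le> norm (snd p) * norm (snd w)" by (rule Cauchy_Schwarz_ineq2)
  also have "\<dots> \<le> norm (snd p) * \<bar>fst w\<bar>" using W by (simp add: mult_left_mono)
  finally have "\<bar>fst w\<bar> = 0"
    using P by (smt (verit) mult_le_cancel_right abs_ge_zero)
  with W have "w = 0" by (simp add: prod_eq_iff)
  with assms(3) show False ..
qed

lemma tangent_mink_pos:
  assumes "c \<noteq> 0" "p \<in> hypK c" "w \<in> tangent p" "w \<noteq> 0"
  shows "mink w w > 0"
  using assms by (intro mink_pos_if_orthogonal_timelike[of p]) (auto simp: hypK_def tangent_def)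

lemma tangent_mink_nonneg:
  assumes "c \<noteq> 0" "p \<in> hypK c" "w \<in> tangent p"
  shows "mink w w \<ge> 0"
  using tangent_mink_pos[OF assms] by (cases "w = 0") auto

lemma mink_hypK_neg:
  assumes "c \<noteq> 0" "r \<in> hypK c" "p \<in> hypK c"
  shows "mink r p < 0"
proof -
  have time_dominates: "norm (snd x) < fst x" if "x \<in> hypK c" for x :: "real \<times> 'a"
  proof (rule power2_less_imp_less)
    show "norm (snd x)^2 < (fst x)^2"
      using that assms(1) by (simp add: hypK_def mink_def dot_square_norm power2_eq_square)
        (smt (verit) not_real_square_gt_zero)
  qed (use that in \<open>simp add: hypK_def\<close>)
  have "snd r \<bullet> snd p \<le> norm (snd r) * norm (snd p)" by (rule norm_cauchy_schwarz)
  also have "\<dots> < fst r * fst p"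
    using time_dominates[OF assms(2)] time_dominates[OF assms(3)]
    by (intro mult_strict_mono) (auto intro: le_less_trans[OF norm_ge_zero])
  finally show ?thesis by (simp add: mink_def)
qed

lemma mink_cauchy_schwarz_tangent:
  assumes "c \<noteq> 0" "p \<in> hypK c" "u \<in> tangent p" "v \<in> tangent p"
  shows "(mink u v)^2 \<le> mink u u * mink v v"
proof (cases "v = 0")
  case False
  define m where "m = mink v v"
  have m: "m > 0" using tangent_mink_pos[OF assms(1,2,4) False] by (simp add: m_def)
  have "mink v u = mink u v" by (rule mink_commute)
  then have "mink (m *\<^sub>R u - mink u v *\<^sub>R v) (m *\<^sub>R u - mink u v *\<^sub>R v)
      = m * (m * mink u u - (mink u v)^2)"
    by (simp add: m_def algebra_simps power2_eq_square)
  moreover have "m *\<^sub>R u - mink u v *\<^sub>R v \<in> tangent p"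
    using assms(3,4) by (simp add: tangent_def)
  ultimately have "0 \<le> m * (m * mink u u - (mink u v)^2)"
    using tangent_mink_nonneg[OF assms(1,2)] by metis
  with m show ?thesis by (simp add: zero_le_mult_iff m_def mult.commute)
qed simp

section \<open>Geodesics and parallel fields\<close>

lemma has_vector_derivative_zero_imp_const:
  fixes f :: "real \<Rightarrow> 'b::real_normed_vector"
  assumes "\<And>t. (f has_vector_derivative 0) (at t)"
  shows "f t = f s"
proof -
  obtain k where "\<And>t. f t = k"
    using has_vector_derivative_zero_constant[of UNIV f] assms by auto
  then show ?thesis by simp
qed

lemma hyperbolic_ode_unique:
  fixes x y :: "real \<Rightarrow> 'b::real_normed_vector"
  assumes L: "L > 0"
    and x': "\<And>t. (x has_vector_derivative y t) (at t)"
    and y': "\<And>t. (y has_vector_derivative L^2 *\<^sub>R x t) (at t)"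
  shows "x t = cosh (L * t) *\<^sub>R x 0 + (sinh (L * t) / L) *\<^sub>R y 0"
proof -
  \<comment> \<open>\<open>e\<^sup>L\<^sup>t (y - L x)\<close> and \<open>e\<^sup>-\<^sup>L\<^sup>t (y + L x)\<close> are constant.\<close>
  have "((\<lambda>t. exp (L * t) *\<^sub>R (y t - L *\<^sub>R x t)) has_vector_derivative 0) (at t)"
    and "((\<lambda>t. exp (- L * t) *\<^sub>R (y t + L *\<^sub>R x t)) has_vector_derivative 0) (at t)" for t
    by (rule has_vector_derivative_eq_rhs, (rule derivative_eq_intros refl x' y')+,
        simp add: algebra_simps power2_eq_square)+
  from this[THEN has_vector_derivative_zero_imp_const, of t 0]
  have "exp (L * t) *\<^sub>R (y t - L *\<^sub>R x t) = y 0 - L *\<^sub>R x 0"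
    and "exp (- L * t) *\<^sub>R (y t + L *\<^sub>R x t) = y 0 + L *\<^sub>R x 0"
    by simp_all
  from this[THEN arg_cong[where f="\<lambda>z. exp (- L * t) *\<^sub>R z"]]
    this[THEN arg_cong[where f="\<lambda>z. exp (L * t) *\<^sub>R z"]]
  have e: "y t - L *\<^sub>R x t = exp (- L * t) *\<^sub>R (y 0 - L *\<^sub>R x 0)"
    "y t + L *\<^sub>R x t = exp (L * t) *\<^sub>R (y 0 + L *\<^sub>R x 0)"
    by (simp_all add: exp_add[symmetric])
  have "(2 * L) *\<^sub>R x t = (y t + L *\<^sub>R x t) - (y t - L *\<^sub>R x t)"
    by (simp add: algebra_simps flip: scaleR_2)
  also have "\<dots> = exp (L * t) *\<^sub>R (y 0 + L *\<^sub>R x 0) - exp (- L * t) *\<^sub>R (y 0 - L *\<^sub>R x 0)"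
    by (simp only: e)
  also have "\<dots> = (2 * L) *\<^sub>R (cosh (L * t) *\<^sub>R x 0 + (sinh (L * t) / L) *\<^sub>R y 0)"
    using L by (simp add: cosh_def sinh_def scaleR_add_right scaleR_diff_right scaleR_diff_left
        scaleR_add_left distrib_left mult.commute)
  finally have "(2 * L) *\<^sub>R x t = (2 * L) *\<^sub>R (cosh (L * t) *\<^sub>R x 0 + (sinh (L * t) / L) *\<^sub>R y 0)" .
  with L show ?thesis by simp
qed

definition parallel_field :: "(real \<Rightarrow> real \<times> 'a::euclidean_space) \<Rightarrow> (real \<Rightarrow> real \<times> 'a) \<Rightarrow> bool" where
  "parallel_field \<gamma> V \<longleftrightarrow> (\<forall>t. V t \<in> tangent (\<gamma> t)) \<and>
     (\<exists>V'. \<forall>t. (V has_vector_derivative V' t) (at t) \<and> (\<exists>k. V' t = k *\<^sub>R \<gamma> t))"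

lemma ex_normal_derivative_iff:
  "(\<exists>V'. \<forall>t. (V has_vector_derivative V' t) (at t) \<and> (\<exists>k. V' t = k *\<^sub>R \<gamma> t)) \<longleftrightarrow>
    (\<exists>k. \<forall>t. (V has_vector_derivative k t *\<^sub>R \<gamma> t) (at t))"
proof
  assume "\<exists>V'. \<forall>t. (V has_vector_derivative V' t) (at t) \<and> (\<exists>k. V' t = k *\<^sub>R \<gamma> t)"
  then obtain V' k where "\<forall>t. (V has_vector_derivative V' t) (at t)" "\<forall>t. V' t = k t *\<^sub>R \<gamma> t"
    by metis
  then show "\<exists>k. \<forall>t. (V has_vector_derivative k t *\<^sub>R \<gamma> t) (at t)" by auto
next
  assume "\<exists>k. \<forall>t. (V has_vector_derivative k t *\<^sub>R \<gamma> t) (at t)"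
  then obtain k where "\<forall>t. (V has_vector_derivative k t *\<^sub>R \<gamma> t) (at t)" ..
  then show "\<exists>V'. \<forall>t. (V has_vector_derivative V' t) (at t) \<and> (\<exists>k. V' t = k *\<^sub>R \<gamma> t)"
    by (intro exI[of _ "\<lambda>t. k t *\<^sub>R \<gamma> t"]) blast
qed

lemma parallel_field_iff:
  "parallel_field \<gamma> V \<longleftrightarrow> (\<forall>t. V t \<in> tangent (\<gamma> t)) \<and>
     (\<exists>k. \<forall>t. (V has_vector_derivative k t *\<^sub>R \<gamma> t) (at t))"
  unfolding parallel_field_def ex_normal_derivative_iff ..

lemma geodesic_iff:
  "geodesic c \<gamma> \<gamma>' \<longleftrightarrow> (\<forall>t. \<gamma> t \<in> hypK c \<and> (\<gamma> has_vector_derivative \<gamma>' t) (at t)) \<and>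
     (\<exists>k. \<forall>t. (\<gamma>' has_vector_derivative k t *\<^sub>R \<gamma> t) (at t))"
  unfolding geodesic_def ex_normal_derivative_iff ..

lemma parallel_field_mink_const:
  assumes "parallel_field \<gamma> U" "parallel_field \<gamma> V"
  shows "mink (U t) (V t) = mink (U 0) (V 0)"
proof -
  obtain k l where U': "\<And>t. (U has_vector_derivative k t *\<^sub>R \<gamma> t) (at t)"
    and V': "\<And>t. (V has_vector_derivative l t *\<^sub>R \<gamma> t) (at t)"
    using assms by (auto simp: parallel_field_iff)
  have "mink (\<gamma> t) (U t) = 0" "mink (\<gamma> t) (V t) = 0" for t
    using assms by (auto simp: parallel_field_def tangent_def)
  then have "((\<lambda>t. mink (U t) (V t)) has_real_derivative 0) (at t)" for t
    using has_real_derivative_mink[OF U' V', of t] by (simp add: mink_commute[of "U t"])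
  then show ?thesis by (intro DERIV_isconst_all) simp
qed

lemma geodesic_parallel_field:
  assumes "geodesic c \<gamma> \<gamma>'"
  shows "parallel_field \<gamma> \<gamma>'"
proof -
  have \<gamma>': "\<And>t. (\<gamma> has_vector_derivative \<gamma>' t) (at t)" and "\<And>t. \<gamma> t \<in> hypK c"
    using assms by (auto simp: geodesic_def)
  then have "(\<lambda>t. mink (\<gamma> t) (\<gamma> t)) = (\<lambda>t. - (c^2))" by (simp add: hypK_def)
  then have "mink (\<gamma> t) (\<gamma>' t) + mink (\<gamma>' t) (\<gamma> t) = 0" for t
    using has_real_derivative_mink[OF \<gamma>' \<gamma>', of t] DERIV_const DERIV_unique by metis
  then have "\<gamma>' t \<in> tangent (\<gamma> t)" for t by (simp add: tangent_def mink_commute)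
  with assms show ?thesis by (simp add: parallel_field_def geodesic_def)
qed

lemma geodesic_acceleration:
  assumes "c \<noteq> 0" "geodesic c \<gamma> \<gamma>'"
  shows "(\<gamma>' has_vector_derivative (mink (\<gamma>' 0) (\<gamma>' 0) / c^2) *\<^sub>R \<gamma> t) (at t)"
proof -
  obtain k where \<gamma>'': "\<And>t. (\<gamma>' has_vector_derivative k t *\<^sub>R \<gamma> t) (at t)"
    using assms(2) by (auto simp: geodesic_iff)
  have \<gamma>': "\<And>t. (\<gamma> has_vector_derivative \<gamma>' t) (at t)" and "mink (\<gamma> t) (\<gamma> t) = - (c^2)"
    using assms(2) by (auto simp: geodesic_def hypK_def)
  have par: "parallel_field \<gamma> \<gamma>'" by (rule geodesic_parallel_field[OF assms(2)])
  then have "(\<lambda>t. mink (\<gamma> t) (\<gamma>' t)) = (\<lambda>t. 0)" by (simp add: parallel_field_def tangent_def)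
  then have "mink (\<gamma> t) (k t *\<^sub>R \<gamma> t) + mink (\<gamma>' t) (\<gamma>' t) = 0"
    using has_real_derivative_mink[OF \<gamma>' \<gamma>'', of t] DERIV_const DERIV_unique by metis
  then have "k t = mink (\<gamma>' 0) (\<gamma>' 0) / c^2"
    using parallel_field_mink_const[OF par par, of t] \<open>mink (\<gamma> t) (\<gamma> t) = - (c^2)\<close> assms(1)
    by (simp add: field_simps)
  then show ?thesis using \<gamma>''[of t] by simp
qed

section \<open>The exponential map\<close>

definition rapidity :: "real \<Rightarrow> real \<times> 'a::euclidean_space \<Rightarrow> real" where
  "rapidity c w = mnorm w / c"

lemma rapidity_0 [simp]: "rapidity c 0 = 0"
  by (simp add: rapidity_def mnorm_def)

lemma rapidity_nonneg: "c > 0 \<Longrightarrow> mink w w \<ge> 0 \<Longrightarrow> rapidity c w \<ge> 0"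
  by (simp add: rapidity_def mnorm_def)

lemma mink_self_eq_rapidity: "c > 0 \<Longrightarrow> mink w w \<ge> 0 \<Longrightarrow> mink w w = (c * rapidity c w)^2"
  by (simp add: rapidity_def mnorm_def)

lemma rapidity_pos:
  assumes "c > 0" "p \<in> hypK c" "w \<in> tangent p" "w \<noteq> 0"
  shows "rapidity c w > 0"
  using tangent_mink_pos[of c p w] assms by (simp add: rapidity_def mnorm_def)

text \<open>For \<open>w = 0\<close> the junk value \<open>sinh 0 / 0 = 0\<close> makes this the constant curve \<open>p\<close>.\<close>

definition geod :: "real \<Rightarrow> real \<times> 'a::euclidean_space \<Rightarrow> real \<times> 'a \<Rightarrow> real \<Rightarrow> real \<times> 'a" where
  "geod c p w t = cosh (rapidity c w * t) *\<^sub>R p + (sinh (rapidity c w * t) / rapidity c w) *\<^sub>R w"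

definition geod_deriv :: "real \<Rightarrow> real \<times> 'a::euclidean_space \<Rightarrow> real \<times> 'a \<Rightarrow> real \<Rightarrow> real \<times> 'a" where
  "geod_deriv c p w t =
     (rapidity c w * sinh (rapidity c w * t)) *\<^sub>R p + cosh (rapidity c w * t) *\<^sub>R w"

lemma geod_0 [simp]: "geod c p 0 = (\<lambda>t. p)"
  by (rule ext) (simp add: geod_def)

lemma geod_at_0 [simp]: "geod c p w 0 = p"
  by (simp add: geod_def)

lemma geod_has_vector_derivative:
  assumes "c > 0" "p \<in> hypK c" "w \<in> tangent p"
  shows "(geod c p w has_vector_derivative geod_deriv c p w t) (at t)"
proof (cases "w = 0")
  case False
  with assms have "rapidity c w \<noteq> 0" using rapidity_pos by (metis less_irrefl)
  then show ?thesis unfolding geod_def geod_deriv_def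
    by (auto intro!: derivative_eq_intros simp: algebra_simps)
qed (simp add: geod_def geod_deriv_def)

lemma geod_deriv_has_vector_derivative:
  "(geod_deriv c p w has_vector_derivative (rapidity c w)^2 *\<^sub>R geod c p w t) (at t)"
  unfolding geod_def geod_deriv_def
  by (rule has_vector_derivative_eq_rhs, (rule derivative_eq_intros refl)+)
    (simp add: algebra_simps power2_eq_square)

lemma mink_geod_p:
  assumes "p \<in> hypK c" "w \<in> tangent p"
  shows "mink (geod c p w t) p = - (c^2) * cosh (rapidity c w * t)"
  using assms by (simp add: geod_def hypK_def tangent_def mink_commute[of w p])

lemma mink_geod_self:
  assumes "c > 0" "p \<in> hypK c" "w \<in> tangent p"
  shows "mink (geod c p w t) (geod c p w t) = - (c^2)"
proof (cases "w = 0")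
  case False
  define a where "a = rapidity c w"
  have ww: "mink w w \<ge> 0" using tangent_mink_nonneg[of c p w] assms by simp
  have a: "a > 0" "mink w w = (c * a)^2"
    using rapidity_pos[OF assms False] mink_self_eq_rapidity[OF assms(1) ww]
    by (simp_all add: a_def)
  have "mink (geod c p w t) (geod c p w t) = - (c^2) * ((cosh (a * t))^2 - (sinh (a * t))^2)"
    using assms a unfolding geod_def a_def[symmetric]
    by (simp add: hypK_def tangent_def mink_commute[of w p] power2_eq_square field_simps)
  then show ?thesis by (simp add: hyperbolic_pythagoras)
qed (use assms in \<open>simp add: hypK_def\<close>)

lemma curve_in_hypK:
  fixes \<gamma> :: "real \<Rightarrow> real \<times> 'a::euclidean_space"
  assumes "c \<noteq> 0" "continuous_on UNIV \<gamma>" "\<And>t. mink (\<gamma> t) (\<gamma> t) = - (c^2)" "\<gamma> 0 \<in> hypK c"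
  shows "\<gamma> t \<in> hypK c"
proof -
  \<comment> \<open>The time coordinate never vanishes on the hyperboloid, so it cannot change sign.\<close>
  have time_nonzero: "fst (\<gamma> s) \<noteq> 0" for s
  proof
    assume "fst (\<gamma> s) = 0"
    then have "0 \<le> mink (\<gamma> s) (\<gamma> s)" by (simp add: mink_def)
    with assms(1) assms(3)[of s] show False by simp
  qed
  have cont: "continuous_on {a..b} (\<lambda>s. fst (\<gamma> s))" for a b
    using continuous_on_subset[OF assms(2)] by (intro continuous_on_fst) blast
  have "fst (\<gamma> t) > 0"
  proof (rule ccontr)
    assume "\<not> fst (\<gamma> t) > 0"
    moreover have "fst (\<gamma> 0) > 0" using assms(4) by (simp add: hypK_def)
    ultimately obtain s where "fst (\<gamma> s) = 0"
    proof (cases "t \<le> 0")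
      case True
      with \<open>\<not> fst (\<gamma> t) > 0\<close> \<open>fst (\<gamma> 0) > 0\<close> show ?thesis
        using IVT'[of "\<lambda>s. fst (\<gamma> s)" t 0 0, OF _ _ _ cont] that by force
    next
      case False
      with \<open>\<not> fst (\<gamma> t) > 0\<close> \<open>fst (\<gamma> 0) > 0\<close> show ?thesis
        using IVT2'[of "\<lambda>s. fst (\<gamma> s)" t 0 0, OF _ _ _ cont] that by force
    qed
    with time_nonzero show False by blast
  qed
  with assms(3) show ?thesis by (simp add: hypK_def)
qed

lemma geod_in_hypK:
  assumes "c > 0" "p \<in> hypK c" "w \<in> tangent p"
  shows "geod c p w t \<in> hypK c"
proof (rule curve_in_hypK)
  show "continuous_on UNIV (geod c p w)"
    using geod_has_vector_derivative[OF assms, THEN has_vector_derivative_continuous]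
    by (intro continuous_at_imp_continuous_on) blast
qed (use assms mink_geod_self[OF assms] in auto)

lemma geodesic_geod:
  assumes "c > 0" "p \<in> hypK c" "w \<in> tangent p"
  shows "geodesic c (geod c p w) (geod_deriv c p w)"
  unfolding geodesic_iff
  using geod_in_hypK[OF assms] geod_has_vector_derivative[OF assms]
    geod_deriv_has_vector_derivative[of c p w]
  by (intro conjI allI exI[of _ "\<lambda>t. (rapidity c w)^2"])

lemma geodesic_eq_geod:
  assumes "c > 0" "geodesic c \<gamma> \<gamma>'"
  shows "\<gamma> t = geod c (\<gamma> 0) (\<gamma>' 0) t"
proof -
  define p w where "p = \<gamma> 0" and "w = \<gamma>' 0"
  have \<gamma>': "\<And>t. (\<gamma> has_vector_derivative \<gamma>' t) (at t)" and p: "p \<in> hypK c"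
    using assms(2) by (auto simp: geodesic_def p_def)
  have w: "w \<in> tangent p"
    using geodesic_parallel_field[OF assms(2)] by (simp add: parallel_field_def p_def w_def)
  have "mink w w = (c * rapidity c w)^2"
    using mink_self_eq_rapidity[OF assms(1)] tangent_mink_nonneg[of c p w] assms(1) p w by simp
  then have \<gamma>'': "(\<gamma>' has_vector_derivative (rapidity c w)^2 *\<^sub>R \<gamma> t) (at t)" for t
    using geodesic_acceleration[OF _ assms(2), of t] assms(1)
    by (simp add: w_def power_mult_distrib)
  show ?thesis
  proof (cases "w = 0")
    case True
    then have "\<gamma>' s = 0" for s
      using has_vector_derivative_zero_imp_const[of \<gamma>' s 0] \<gamma>'' by (simp add: w_def)
    then have "\<gamma> t = p"
      using has_vector_derivative_zero_imp_const[of \<gamma> t 0] \<gamma>' by (simp add: p_def)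
    with True show ?thesis by (simp add: p_def w_def)
  next
    case False
    have "\<gamma> t = cosh (rapidity c w * t) *\<^sub>R p + (sinh (rapidity c w * t) / rapidity c w) *\<^sub>R w"
      using hyperbolic_ode_unique[OF rapidity_pos[OF assms(1) p w False] \<gamma>' \<gamma>'', where t=t]
      unfolding p_def w_def .
    then show ?thesis by (simp add: geod_def p_def w_def)
  qed
qed

lemma expK_eq_geod:
  assumes "c > 0" "p \<in> hypK c" "w \<in> tangent p"
  shows "expK c p w = geod c p w 1"
  unfolding expK_def
proof (rule the_equality)
  show "\<exists>\<gamma> \<gamma>'. geodesic c \<gamma> \<gamma>' \<and> \<gamma> 0 = p \<and> \<gamma>' 0 = w \<and> \<gamma> 1 = geod c p w 1"
    using geodesic_geod[OF assms]
    by (intro exI[of _ "geod c p w"] exI[of _ "geod_deriv c p w"]) (simp add: geod_deriv_def)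
qed (use geodesic_eq_geod[OF assms(1)] in blast)

section \<open>Parallel transport\<close>

text \<open>The part of \<open>u\<close> orthogonal to \<open>w\<close> stays constant, while its component along \<open>w\<close>
  follows the velocity \<open>geod_deriv c p w t\<close> of the geodesic.\<close>

definition transp_field ::
    "real \<Rightarrow> real \<times> 'a::euclidean_space \<Rightarrow> real \<times> 'a \<Rightarrow> real \<times> 'a \<Rightarrow> real \<Rightarrow> real \<times> 'a" where
  "transp_field c p w u t = u + (mink u w / mink w w) *\<^sub>R
     ((rapidity c w * sinh (rapidity c w * t)) *\<^sub>R p + (cosh (rapidity c w * t) - 1) *\<^sub>R w)"

lemma transp_field_at_0 [simp]: "transp_field c p w u 0 = u"
  by (simp add: transp_field_def)

lemma parallel_field_transp_field:
  assumes c: "c > 0" and p: "p \<in> hypK c" and w: "w \<in> tangent p" and u: "u \<in> tangent p"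
  shows "parallel_field (geod c p w) (transp_field c p w u)"
proof (cases "w = 0")
  case True
  then have "transp_field c p w u = (\<lambda>t. u)" by (simp add: transp_field_def fun_eq_iff)
  with True u show ?thesis
    by (auto simp: parallel_field_iff intro!: exI[of _ "\<lambda>t. 0"])
next
  case False
  define a where "a = rapidity c w"
  have ww: "mink w w \<ge> 0" using tangent_mink_nonneg[of c p w] c p w by simp
  have a: "a > 0" "mink w w = (c * a)^2"
    using rapidity_pos[OF c p w False] mink_self_eq_rapidity[OF c ww] by (simp_all add: a_def)
  have tangent: "mink (geod c p w t) (transp_field c p w u t) = 0" for t
  proof -
    have "mink (geod c p w t) (transp_field c p w u t) = sinh (a * t) / a * mink u w
        + mink u w / (c * a)^2 * (- (c^2) * a * sinh (a * t) * cosh (a * t)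
          + sinh (a * t) / a * (cosh (a * t) - 1) * (c * a)^2)"
      using p w u a unfolding geod_def transp_field_def a_def[symmetric]
      by (simp add: hypK_def tangent_def mink_commute[of w p] mink_commute[of w u] algebra_simps)
        (simp add: diff_divide_distrib)
    also have "\<dots> = 0" using a c by (simp add: field_simps power2_eq_square)
    finally show ?thesis .
  qed
  have "(transp_field c p w u has_vector_derivative
      (mink u w / mink w w * a^2) *\<^sub>R geod c p w t) (at t)" for t
    unfolding transp_field_def geod_def a_def[symmetric]
    by (rule has_vector_derivative_eq_rhs, (rule derivative_eq_intros refl)+)
      (use a in \<open>simp add: algebra_simps power2_eq_square\<close>)
  with tangent show ?thesis
    by (auto simp: parallel_field_iff tangent_def intro!: exI[of _ "\<lambda>t. mink u w / mink w w * a^2"])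
qed

lemma parallel_field_unique:
  assumes "c \<noteq> 0" "\<And>t. \<gamma> t \<in> hypK c" "parallel_field \<gamma> U" "parallel_field \<gamma> V" "U 0 = V 0"
  shows "U t = V t"
proof (rule ccontr)
  have const: "mink (X t) (Y t) = mink (X 0) (Y 0)" if "X \<in> {U, V}" "Y \<in> {U, V}" for X Y
    using that parallel_field_mink_const assms(3,4) by blast
  have "mink (U t - V t) (U t - V t) = mink (U 0 - V 0) (U 0 - V 0)"
    using const[of U U] const[of U V] const[of V U] const[of V V] by simp
  then have "mink (U t - V t) (U t - V t) = 0" using assms(5) by simp
  moreover have "U t - V t \<in> tangent (\<gamma> t)"
    using assms(3,4) by (simp add: parallel_field_def tangent_def)
  moreover assume "U t \<noteq> V t"
  ultimately show False using tangent_mink_pos[OF assms(1) assms(2)[of t], of "U t - V t"] by simp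
qed

lemma ptransp_eq_transp_field:
  assumes c: "c > 0" and p: "p \<in> hypK c" and w: "w \<in> tangent p" and u: "u \<in> tangent p"
  shows "ptransp c p w u = transp_field c p w u 1"
  unfolding ptransp_def
proof (rule the_equality)
  show "\<exists>\<gamma> \<gamma>' V. geodesic c \<gamma> \<gamma>' \<and> \<gamma> 0 = p \<and> \<gamma>' 0 = w \<and> V 0 = u \<and> (\<forall>t. V t \<in> tangent (\<gamma> t)) \<and>
      (\<exists>V'. \<forall>t. (V has_vector_derivative V' t) (at t) \<and> (\<exists>k. V' t = k *\<^sub>R \<gamma> t)) \<and>
      V 1 = transp_field c p w u 1"
    using geodesic_geod[OF c p w] parallel_field_transp_field[OF c p w u]
    by (intro exI[of _ "geod c p w"] exI[of _ "geod_deriv c p w"] exI[of _ "transp_field c p w u"])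
      (simp add: geod_deriv_def parallel_field_def)
next
  fix u'
  assume "\<exists>\<gamma> \<gamma>' V. geodesic c \<gamma> \<gamma>' \<and> \<gamma> 0 = p \<and> \<gamma>' 0 = w \<and> V 0 = u \<and> (\<forall>t. V t \<in> tangent (\<gamma> t)) \<and>
      (\<exists>V'. \<forall>t. (V has_vector_derivative V' t) (at t) \<and> (\<exists>k. V' t = k *\<^sub>R \<gamma> t)) \<and> V 1 = u'"
  then obtain \<gamma> \<gamma>' V where \<gamma>: "geodesic c \<gamma> \<gamma>'" "\<gamma> 0 = p" "\<gamma>' 0 = w"
    and V: "parallel_field \<gamma> V" "V 0 = u" "V 1 = u'"
    unfolding parallel_field_def by blast
  have "\<gamma> = geod c p w" using geodesic_eq_geod[OF c \<gamma>(1)] \<gamma>(2,3) by blast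
  with V have "V 1 = transp_field c p w u 1"
    using parallel_field_unique[OF _ geod_in_hypK[OF c p w] _ parallel_field_transp_field[OF c p w u]]
      c by simp
  with V show "u' = transp_field c p w u 1" by simp
qed

lemma ptransp_in_tangent:
  assumes "c > 0" "p \<in> hypK c" "w \<in> tangent p" "u \<in> tangent p"
  shows "ptransp c p w u \<in> tangent (expK c p w)"
  using parallel_field_transp_field[OF assms]
  by (simp add: ptransp_eq_transp_field[OF assms] expK_eq_geod[OF assms(1-3)] parallel_field_def)

lemma mink_ptransp_self:
  assumes "c > 0" "p \<in> hypK c" "w \<in> tangent p" "u \<in> tangent p"
  shows "mink (ptransp c p w u) (ptransp c p w u) = mink u u"
  using parallel_field_mink_const[OF parallel_field_transp_field[OF assms]
      parallel_field_transp_field[OF assms]]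
  by (simp add: ptransp_eq_transp_field[OF assms])

section \<open>Relative velocity\<close>

lemma vel_eq: "c > 0 \<Longrightarrow> vel c w = (tanh (rapidity c w) / rapidity c w) *\<^sub>R w"
  by (simp add: vel_def rapidity_def)

lemma vel_in_tangent: "w \<in> tangent p \<Longrightarrow> vel c w \<in> tangent p"
  by (simp add: vel_def tangent_def)

lemma mink_vel_self:
  assumes "c > 0" "mink w w \<ge> 0"
  shows "mink (vel c w) (vel c w) = (c * tanh (rapidity c w))^2"
  using mink_self_eq_rapidity[OF assms]
  by (cases "rapidity c w = 0") (simp_all add: vel_eq[OF assms(1)] power2_eq_square)

lemma mink_vel_less:
  assumes "c > 0" "mink w w \<ge> 0"
  shows "mink (vel c w) (vel c w) < c^2"
proof -
  have "(tanh (rapidity c w))^2 < 1"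
    using tanh_real_bounds[of "rapidity c w"] by (simp add: abs_square_less_1 abs_less_iff)
  with assms(1) show ?thesis by (simp add: mink_vel_self[OF assms] power_mult_distrib)
qed

lemma lorentz_gamma_vel:
  assumes "c > 0" "mink w w \<ge> 0"
  shows "lorentz_gamma c (vel c w) = cosh (rapidity c w)"
proof -
  define a where "a = rapidity c w"
  have "1 - (tanh a)^2 = ((cosh a)^2 - (sinh a)^2) / (cosh a)^2"
    using cosh_real_pos[of a] by (simp add: tanh_def field_simps)
  also have "\<dots> = 1 / (cosh a)^2" by (simp add: hyperbolic_pythagoras)
  finally have "1 - (tanh a)^2 = 1 / (cosh a)^2" .
  then show ?thesis
    using assms(1) by (simp add: lorentz_gamma_def mink_vel_self[OF assms] a_def[symmetric]
        power_mult_distrib real_sqrt_divide)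
qed

lemma lorentz_gamma_pos: "c > 0 \<Longrightarrow> mink v v < c^2 \<Longrightarrow> lorentz_gamma c v > 0"
  by (simp add: lorentz_gamma_def)

lemma expK_eq_four_velocity:
  assumes "c > 0" "p \<in> hypK c" "w \<in> tangent p"
  shows "expK c p w = lorentz_gamma c (vel c w) *\<^sub>R (p + vel c w)"
proof -
  have "mink w w \<ge> 0" using tangent_mink_nonneg[of c p w] assms by simp
  then have "lorentz_gamma c (vel c w) = cosh (rapidity c w)"
    by (rule lorentz_gamma_vel[OF assms(1)])
  then show ?thesis
    using cosh_real_pos[of "rapidity c w"]
    by (simp add: expK_eq_geod[OF assms] geod_def vel_eq[OF assms(1)] tanh_def scaleR_add_right)
qed

lemma vel_eq_if_expK_eq:
  assumes "c > 0" "p \<in> hypK c" "W \<in> tangent p" "v \<in> tangent p"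
    and "expK c p W = x *\<^sub>R (p + v)"
  shows "vel c W = v"
proof -
  define \<gamma> where "\<gamma> = lorentz_gamma c (vel c W)"
  have mink_p: "mink (y *\<^sub>R (p + u)) p = - y * c^2" if "u \<in> tangent p" for y u
    using that assms(2) by (simp add: hypK_def tangent_def mink_commute[of u p])
  have eq: "\<gamma> *\<^sub>R (p + vel c W) = x *\<^sub>R (p + v)"
    using assms(5) expK_eq_four_velocity[OF assms(1-3)] by (simp add: \<gamma>_def)
  then have "mink (\<gamma> *\<^sub>R (p + vel c W)) p = mink (x *\<^sub>R (p + v)) p" by simp
  then have "\<gamma> = x"
    using mink_p[OF vel_in_tangent[OF assms(3)]] mink_p[OF assms(4)] assms(1) by simp
  moreover have "\<gamma> > 0"
    using tangent_mink_nonneg[of c p W] assms by (simp add: \<gamma>_def lorentz_gamma_vel)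
  ultimately show ?thesis using eq by simp
qed

section \<open>Inverting the exponential map\<close>

lemma expK_in_hypK:
  assumes "c > 0" "p \<in> hypK c" "w \<in> tangent p"
  shows "expK c p w \<in> hypK c"
  using geod_in_hypK[OF assms] by (simp add: expK_eq_geod[OF assms])

lemma expK_inj:
  assumes c: "c > 0" and p: "p \<in> hypK c" and w: "w \<in> tangent p" "w' \<in> tangent p"
    and eq: "expK c p w = expK c p w'"
  shows "w = w'"
proof -
  have nonneg: "rapidity c u \<ge> 0" if "u \<in> tangent p" for u
    using rapidity_nonneg[OF c] tangent_mink_nonneg[of c p u] c p that by simp
  have eq: "geod c p w 1 = geod c p w' 1" using eq by (simp add: expK_eq_geod c p w)
  then have "mink (geod c p w 1) p = mink (geod c p w' 1) p" by simp
  then have a: "rapidity c w = rapidity c w'"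
    using nonneg[OF w(1)] nonneg[OF w(2)] c
    by (simp add: mink_geod_p[OF p w(1)] mink_geod_p[OF p w(2)])
  show ?thesis
  proof (cases "rapidity c w = 0")
    case True
    with a show ?thesis using rapidity_pos[OF c p] w by (metis less_irrefl)
  next
    case False
    then have "sinh (rapidity c w) / rapidity c w \<noteq> 0" using nonneg[OF w(1)] by simp
    with eq a show ?thesis by (simp add: geod_def)
  qed
qed

lemma expK_surj:
  assumes c: "c > 0" and p: "p \<in> hypK c" and r: "r \<in> hypK c"
  shows "\<exists>w \<in> tangent p. expK c p w = r"
proof -
  define C where "C = - mink r p / c^2"
  define y where "y = r - C *\<^sub>R p"
  have pp: "mink p p = - (c^2)" "mink r r = - (c^2)" using p r by (auto simp: hypK_def)
  have y: "y \<in> tangent p" using c by (simp add: tangent_def y_def C_def pp mink_commute[of p r])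
  have yy: "mink y y = c^2 * (C^2 - 1)"
    using c by (simp add: y_def pp mink_commute[of p r] C_def field_simps power2_eq_square)
  have "C > 0" using mink_hypK_neg[of c r p] c p r by (simp add: C_def divide_neg_pos)
  moreover have "C^2 \<ge> 1"
    using tangent_mink_nonneg[of c p y] c p y by (simp add: yy zero_le_mult_iff)
  ultimately have C: "C \<ge> 1" using power2_le_imp_le[of 1 C] by simp
  define a where "a = arcosh C"
  have a: "a \<ge> 0" "cosh a = C" "sinh a = sqrt (C^2 - 1)"
    using C by (simp_all add: a_def sinh_arcosh_real)
  define w where "w = (a / sinh a) *\<^sub>R y"
  have w: "w \<in> tangent p" using y by (simp add: w_def tangent_def)
  show ?thesis
  proof (cases "C = 1")
    case True
    then have "y = 0" using tangent_mink_pos[of c p y] c p y yy by fastforce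
    with True have "r = p" by (simp add: y_def)
    then show ?thesis by (intro bexI[of _ 0]) (simp_all add: expK_eq_geod c p tangent_def)
  next
    case False
    with C have "sinh a > 0" by (simp add: a)
    then have "mink w w = (c * a)^2"
      using a(3) C by (simp add: w_def yy power_mult_distrib power_divide power2_eq_square)
    then have "rapidity c w = a" using c a(1) by (simp add: rapidity_def mnorm_def)
    then have "expK c p w = C *\<^sub>R p + y"
      unfolding expK_eq_geod[OF c p w] using \<open>sinh a > 0\<close> by (simp add: geod_def a(2) w_def)
    with w show ?thesis by (auto simp: y_def)
  qed
qed

lemma ex1_expK_eq:
  assumes "c > 0" "p \<in> hypK c" "r \<in> hypK c"
  shows "\<exists>!w. w \<in> tangent p \<and> expK c p w = r"
  using expK_surj[OF assms] expK_inj[OF assms(1,2)] by blast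

lemma oplusT_expK:
  assumes c: "c > 0" and p: "p \<in> hypK c" and w: "w1 \<in> tangent p" "w2 \<in> tangent p"
  shows "oplusT c p w1 w2 \<in> tangent p \<and>
    expK c p (oplusT c p w1 w2) = expK c (expK c p w1) (ptransp c p w1 w2)"
proof -
  have "expK c (expK c p w1) (ptransp c p w1 w2) \<in> hypK c"
    by (intro expK_in_hypK c expK_in_hypK[OF c p w(1)] ptransp_in_tangent c p w)
  from theI'[OF ex1_expK_eq[OF c p this]] show ?thesis by (simp add: oplusT_def Let_def)
qed

section \<open>Boosts and the Einstein sum\<close>

text \<open>The pure Lorentz boost with velocity \<open>v \<in> p\<^sup>\<bottom>\<close> in the rest frame of \<open>p\<close>: it maps \<open>p\<close>
  to the four-velocity \<open>\<gamma>\<^sub>v (p + v)\<close> and fixes the vectors orthogonal to \<open>p\<close> and \<open>v\<close>.\<close>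

definition boost :: "real \<Rightarrow> real \<times> 'a::euclidean_space \<Rightarrow> real \<times> 'a \<Rightarrow> real \<times> 'a \<Rightarrow> real \<times> 'a" where
  "boost c p v x = x
     - (mink x p / c^2) *\<^sub>R ((lorentz_gamma c v - 1) *\<^sub>R p + lorentz_gamma c v *\<^sub>R v)
     + (mink x v / c^2) *\<^sub>R
         (lorentz_gamma c v *\<^sub>R p + ((lorentz_gamma c v)^2 / (1 + lorentz_gamma c v)) *\<^sub>R v)"

lemma linear_boost: "linear (boost c p v)"
  by (rule linearI) (simp_all add: boost_def algebra_simps add_divide_distrib)

lemma boost_p:
  assumes "c \<noteq> 0" "p \<in> hypK c" "v \<in> tangent p"
  shows "boost c p v p = lorentz_gamma c v *\<^sub>R (p + v)"
  using assms by (simp add: boost_def hypK_def tangent_def algebra_simps)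

lemma boost_tangent:
  assumes "u \<in> tangent p"
  shows "boost c p v u = u + (mink u v / c^2) *\<^sub>R
    (lorentz_gamma c v *\<^sub>R p + ((lorentz_gamma c v)^2 / (1 + lorentz_gamma c v)) *\<^sub>R v)"
  using assms by (simp add: boost_def tangent_def mink_commute[of u p])

lemma ptransp_eq_boost:
  assumes c: "c > 0" and p: "p \<in> hypK c" and w: "w \<in> tangent p" and u: "u \<in> tangent p"
  shows "ptransp c p w u = boost c p (vel c w) u"
proof (cases "w = 0")
  case True
  with u show ?thesis
    using ptransp_eq_transp_field[OF assms] by (simp add: transp_field_def boost_tangent vel_def)
next
  case False
  define a s k where "a = rapidity c w" and "s = sinh a" and "k = cosh a"
  have ww: "mink w w \<ge> 0" using tangent_mink_nonneg[of c p w] c p w by simp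
  have a: "a > 0" "mink w w = (c * a)^2"
    using rapidity_pos[OF c p w False] mink_self_eq_rapidity[OF c ww] by (simp_all add: a_def)
  have k: "k > 0" "k^2 = s^2 + 1" by (simp_all add: k_def s_def cosh_square_eq)
  have \<gamma>: "lorentz_gamma c (vel c w) = k" by (simp add: lorentz_gamma_vel[OF c ww] k_def a_def)
  have v: "vel c w = (s / (k * a)) *\<^sub>R w" by (simp add: vel_eq[OF c] tanh_def s_def k_def a_def)
  have coeff_p: "mink u w / (c * a)^2 * (a * s) = s / (k * a) * mink u w / c^2 * k"
    using a k c by (simp add: field_simps power2_eq_square)
  have coeff_w: "mink u w / (c * a)^2 * (k - 1)
      = s / (k * a) * mink u w / c^2 * (k^2 / (1 + k)) * (s / (k * a))"
  proof -
    define d where "d = 1 + k"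
    have "s^2 = (k - 1) * d" using k(2) by (simp add: d_def algebra_simps power2_eq_square)
    moreover have "d > 0" using k(1) by (simp add: d_def)
    ultimately show ?thesis unfolding d_def[symmetric]
      using a(1) k(1) c by (simp add: field_simps power2_eq_square) algebra
  qed
  have "ptransp c p w u = u + (mink u w / (c * a)^2 * (a * s)) *\<^sub>R p
      + (mink u w / (c * a)^2 * (k - 1)) *\<^sub>R w"
    by (simp add: ptransp_eq_transp_field[OF assms] transp_field_def a(2) a_def[symmetric]
        s_def[symmetric] k_def[symmetric] scaleR_add_right)
  also have "\<dots> = boost c p (vel c w) u"
    unfolding coeff_p coeff_w boost_tangent[OF u] \<gamma> unfolding v
    by (simp add: algebra_simps)
  finally show ?thesis .
qed

lemma vel_ptransp:
  assumes "c > 0" "p \<in> hypK c" "w \<in> tangent p" "u \<in> tangent p"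
  shows "vel c (ptransp c p w u) = boost c p (vel c w) (vel c u)"
proof -
  have "rapidity c (ptransp c p w u) = rapidity c u"
    by (simp add: rapidity_def mnorm_def mink_ptransp_self[OF assms])
  then show ?thesis
    by (simp add: vel_eq[OF assms(1)] ptransp_eq_boost[OF assms] linear_scale[OF linear_boost])
qed

text \<open>The boost is an isometry of \<open>K\<^sup>c\<close> taking \<open>p\<close> to \<open>exp\<^sub>p w1\<close> whose differential at \<open>p\<close> is
  parallel transport, so it maps geodesics from \<open>p\<close> to geodesics from \<open>exp\<^sub>p w1\<close>.\<close>

lemma expK_ptransp:
  assumes c: "c > 0" and p: "p \<in> hypK c" and w: "w1 \<in> tangent p" "w2 \<in> tangent p"
  shows "expK c (expK c p w1) (ptransp c p w1 w2) = boost c p (vel c w1) (expK c p w2)"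
proof -
  define q w2' B
    where "q = expK c p w1" and "w2' = ptransp c p w1 w2" and "B = boost c p (vel c w1)"
  have q: "q \<in> hypK c" "q = B p"
    using expK_in_hypK[OF c p w(1)] expK_eq_four_velocity[OF c p w(1)]
      boost_p[of c p "vel c w1"] vel_in_tangent[OF w(1)] c p
    by (simp_all add: q_def B_def)
  have w2': "w2' \<in> tangent q" using ptransp_in_tangent[OF c p w] by (simp add: q_def w2'_def)
  have "mink w2 w2 \<ge> 0" "mink w2' w2' \<ge> 0"
    using tangent_mink_nonneg[of c p w2] tangent_mink_nonneg[of c q w2'] c p w q w2' by simp_all
  moreover have "rapidity c w2' = rapidity c w2"
    by (simp add: rapidity_def mnorm_def w2'_def mink_ptransp_self[OF c p w])
  ultimately have \<gamma>: "lorentz_gamma c (vel c w2') = lorentz_gamma c (vel c w2)"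
    by (simp add: lorentz_gamma_vel[OF c])
  have vel_w2': "vel c w2' = B (vel c w2)" unfolding w2'_def B_def by (rule vel_ptransp[OF c p w])
  have "expK c q w2' = lorentz_gamma c (vel c w2') *\<^sub>R (q + vel c w2')"
    by (rule expK_eq_four_velocity[OF c q(1) w2'])
  also have "\<dots> = lorentz_gamma c (vel c w2) *\<^sub>R (B p + B (vel c w2))"
    unfolding \<gamma> unfolding vel_w2' q(2) ..
  also have "\<dots> = B (expK c p w2)"
    by (simp add: expK_eq_four_velocity[OF c p w(2)] B_def linear_add[OF linear_boost]
        linear_scale[OF linear_boost])
  finally show ?thesis by (simp add: q_def w2'_def B_def)
qed

lemma einstein_denominator_pos:
  assumes c: "c > 0" and p: "p \<in> hypK c" and v: "v1 \<in> tangent p" "v2 \<in> tangent p"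
    and ball: "mink v1 v1 < c^2" "mink v2 v2 < c^2"
  shows "1 + mink v1 v2 / c^2 > 0"
proof -
  have "(mink v1 v2)^2 \<le> mink v1 v1 * mink v2 v2"
    using mink_cauchy_schwarz_tangent[of c p v1 v2] c p v by simp
  also have "\<dots> < c^2 * c^2"
    using tangent_mink_nonneg[of c p v1] tangent_mink_nonneg[of c p v2] c p v ball
    by (intro mult_strict_mono) auto
  also have "\<dots> = (c^2)^2" by (rule power2_eq_square[symmetric])
  finally have "\<bar>mink v1 v2\<bar>^2 < (c^2)^2" by simp
  then have "\<bar>mink v1 v2\<bar> < c^2" by (rule power2_less_imp_less) simp
  with c show ?thesis by (simp add: field_simps abs_less_iff)
qed

lemma einstein_add_in_tangent:
  "v1 \<in> tangent p \<Longrightarrow> v2 \<in> tangent p \<Longrightarrow> einstein_add c v1 v2 \<in> tangent p"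
  by (simp add: einstein_add_def tangent_def)

lemma boost_four_velocity:
  assumes c: "c > 0" and p: "p \<in> hypK c" and v: "v1 \<in> tangent p" "v2 \<in> tangent p"
    and ball: "mink v1 v1 < c^2" "mink v2 v2 < c^2"
  shows "boost c p v1 (p + v2)
    = (lorentz_gamma c v1 * (1 + mink v1 v2 / c^2)) *\<^sub>R (p + einstein_add c v1 v2)"
proof -
  define \<gamma> D where "\<gamma> = lorentz_gamma c v1" and "D = 1 + mink v1 v2 / c^2"
  have \<gamma>: "\<gamma> > 0" using lorentz_gamma_pos[OF c ball(1)] by (simp add: \<gamma>_def)
  have D: "D > 0" using einstein_denominator_pos[OF assms] by (simp add: D_def)
  have "boost c p v1 (p + v2) = (\<gamma> * D) *\<^sub>R p + \<gamma> *\<^sub>R v1 + v2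
      + (mink v1 v2 / c^2 * (\<gamma>^2 / (1 + \<gamma>))) *\<^sub>R v1"
    using c p v
    by (simp add: linear_add[OF linear_boost] boost_p boost_tangent \<gamma>_def D_def
        mink_commute[of v2 v1] algebra_simps)
  also have "\<dots> = (\<gamma> * D) *\<^sub>R p
      + \<gamma> *\<^sub>R (v1 + (1 / \<gamma>) *\<^sub>R v2 + (1 / c^2 * (\<gamma> / (1 + \<gamma>)) * mink v1 v2) *\<^sub>R v1)"
    using \<gamma> by (simp add: scaleR_add_right power2_eq_square)
  also have "\<dots> = (\<gamma> * D) *\<^sub>R (p + (1 / D) *\<^sub>R
      (v1 + (1 / \<gamma>) *\<^sub>R v2 + (1 / c^2 * (\<gamma> / (1 + \<gamma>)) * mink v1 v2) *\<^sub>R v1))"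
    using D by (simp add: scaleR_add_right)
  also have "\<dots> = (\<gamma> * D) *\<^sub>R (p + einstein_add c v1 v2)"
    by (simp add: einstein_add_def \<gamma>_def D_def)
  finally show ?thesis by (simp add: \<gamma>_def D_def)
qed

theorem mainTheorem4:
  fixes c :: real and p w1 w2 :: "real \<times> 'a::euclidean_space"
  assumes "c > 0" and "p \<in> hypK c" and "w1 \<in> tangent p" and "w2 \<in> tangent p"
  shows "vel c (oplusT c p w1 w2) = einstein_add c (vel c w1) (vel c w2)"
proof -
  define v1 v2 where "v1 = vel c w1" and "v2 = vel c w2"
  have v: "v1 \<in> tangent p" "v2 \<in> tangent p"
    using vel_in_tangent assms(3,4) by (simp_all add: v1_def v2_def)
  have "mink w1 w1 \<ge> 0" "mink w2 w2 \<ge> 0" using tangent_mink_nonneg[of c p] assms by simp_all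
  then have ball: "mink v1 v1 < c^2" "mink v2 v2 < c^2"
    using mink_vel_less[OF assms(1)] by (simp_all add: v1_def v2_def)
  define W where "W = oplusT c p w1 w2"
  have W: "W \<in> tangent p" "expK c p W = expK c (expK c p w1) (ptransp c p w1 w2)"
    using oplusT_expK[OF assms] by (simp_all add: W_def)
  have "expK c p W = boost c p v1 (expK c p w2)"
    using W(2) expK_ptransp[OF assms] by (simp add: v1_def)
  also have "\<dots> = lorentz_gamma c v2 *\<^sub>R boost c p v1 (p + v2)"
    by (simp add: expK_eq_four_velocity[OF assms(1,2,4)] v2_def linear_scale[OF linear_boost])
  also have "\<dots> = (lorentz_gamma c v2 * (lorentz_gamma c v1 * (1 + mink v1 v2 / c^2)))
      *\<^sub>R (p + einstein_add c v1 v2)"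
    by (simp add: boost_four_velocity[OF assms(1,2) v ball])
  finally have "vel c W = einstein_add c v1 v2"
    by (rule vel_eq_if_expK_eq[OF assms(1,2) W(1) einstein_add_in_tangent[OF v]])
  then show ?thesis by (simp add: W_def v1_def v2_def)
qed

end
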